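(* Let $d\geq1$ be an integer, $\frac{d}{d+2}<q<1$, and set $m=\frac{2}{1-q}-d$ (so that $-\frac{m+d}{2}=\frac{1}{q-1}$ and $m>2$). For $a_1,\dots,a_d>0$ define on $\mathbb{Z}^d$ $$p_{k_1,\dots,k_d}=f_{m,d}(a_1,\dots,a_d)^{-1}\Big(1+\sum_{i=1}^d\frac{k_i^2}{a_i^2}\Big)^{-\frac{m+d}{2}},\qquad f_{m,d}(a_1,\dots,a_d)=\sum_{(k_1,\dots,k_d)\in\mathbb{Z}^d}\Big(1+\sum_{i=1}^d\frac{k_i^2}{a_i^2}\Big)^{-\frac{m+d}{2}}.$$ Let $u_i^2=\sum_{k\in\mathbb{Z}^d}k_i^2p_k$, $i=1,\dots,d$. Then (a) $p$ maximizes the $d$-variate Tsallis entropy $H_q(p)=\frac{1}{q-1}\big(1-\sum_{k\in\mathbb{Z}^d}p_k^q\big)$ among all probability distributions on $\mathbb{Z}^d$ with $\sum_kk_ip_k=0$ and $\sum_kk_i^2p_k=u_i^2$ for all $i$; and (b) as $\min_ia_i\to\infty$, $$\frac{f_{m,d}(a_1,\dots,a_d)}{\prod_{i=1}^da_i}\to\frac{\pi^{d/2}\,\Gamma(\frac m2)}{\Gamma(\frac{m+d}{2})}.$$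
   Context: $\Gamma$ is the Euler Gamma function. *)

theory Defs
  imports "HOL-Analysis.Analysis"
begin

text \<open>Points of Z^d are vectors int^'n, with d = CARD('n).\<close>

definition quad_form :: "real^'n \<Rightarrow> int^'n \<Rightarrow> real" where
  "quad_form a k = 1 + (\<Sum>i\<in>UNIV. (real_of_int (k$i))^2 / (a$i)^2)"

definition f_md :: "real \<Rightarrow> real^'n \<Rightarrow> real" where
  "f_md m a = (\<Sum>\<^sub>\<infinity>k::int^'n. quad_form a k powr (-(m + real CARD('n)) / 2))"

definition p_md :: "real \<Rightarrow> real^'n \<Rightarrow> int^'n \<Rightarrow> real" where
  "p_md m a k = quad_form a k powr (-(m + real CARD('n)) / 2) / f_md m a"

definition tsallis :: "real \<Rightarrow> (int^'n \<Rightarrow> real) \<Rightarrow> real" where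
  "tsallis q p = 1 / (q - 1) * (1 - (\<Sum>\<^sub>\<infinity>k. p k powr q))"

definition feasible :: "real^'n \<Rightarrow> (int^'n \<Rightarrow> real) \<Rightarrow> bool" where
  "feasible u2 p \<longleftrightarrow> (\<forall>k. p k \<ge> 0) \<and> (p has_sum 1) UNIV \<and>
     (\<forall>i. ((\<lambda>k. real_of_int (k$i) * p k) has_sum 0) UNIV \<and>
          ((\<lambda>k. (real_of_int (k$i))^2 * p k) has_sum (u2$i)) UNIV)"

end

theory Submission
  imports Defs "HOL-Probability.Distributions"
begin

text \<open>
Write s = (m + d) / 2, so that s (1 - q) = 1. For part (b), the Gamma integral
Gamma(s) Q^(-s) = int_0^oo x^(s-1) exp(-Q x) dx, applied to Q = 1 + sum_i k_i^2 / a_i^2, factors the lattice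
sum as Gamma(s) f = int_0^oo x^(s-1) exp(-x) prod_i theta(x / a_i^2) dx, where
theta(y) = sum_(k in Z) exp(-y k^2). Comparing theta with the Gaussian integral gives
|theta(y) - sqrt(pi / y)| <= 1, hence theta(x / a_i^2) / a_i = sqrt(pi / x) + O(1 / a_i) with an error term
that stays integrable against x^(s-1) exp(-x); the main term integrates to pi^(d/2) Gamma(s - d/2).

For part (a), concavity of t^q gives r_k^q <= (1 - q) p_k^q + q p_k^(q-1) r_k. The exponent is chosen so
that p_k^(q-1) is a constant multiple of 1 + sum_i k_i^2 / a_i^2; hence sum_k p_k^(q-1) r_k depends only on
the moment constraints and equals sum_k p_k^q, and summing the inequality gives
sum_k r_k^q <= sum_k p_k^q for every feasible r.
\<close>

section \<open>Integral comparison for antitone functions and Jacobi theta sums\<close>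

lemma suminf_indicator_unit_intervals:
  fixes c :: "nat \<Rightarrow> ennreal" and t :: real
  shows "(\<Sum>n. ennreal (indicator {real n..<real n + 1} t) * c n) = (if 0 \<le> t then c (nat \<lfloor>t\<rfloor>) else 0)"
proof -
  have mem: "t \<in> {real n..<real n + 1} \<longleftrightarrow> 0 \<le> t \<and> n = nat \<lfloor>t\<rfloor>" for n
    by (auto simp: floor_eq_iff) linarith+
  have "(\<Sum>n. ennreal (indicator {real n..<real n + 1} t) * c n) =
        (\<Sum>n\<in>{n. 0 \<le> t \<and> n = nat \<lfloor>t\<rfloor>}. ennreal (indicator {real n..<real n + 1} t) * c n)"
    by (rule suminf_finite) (auto simp: mem indicator_def simp del: atLeastLessThan_iff)
  also have "\<dots> = (if 0 \<le> t then c (nat \<lfloor>t\<rfloor>) else 0)"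
    using mem[of "nat \<lfloor>t\<rfloor>"] by (auto simp: indicator_def simp del: atLeastLessThan_iff)
  finally show ?thesis .
qed

lemma nn_integral_indicator_unit_interval:
  "(\<integral>\<^sup>+t. ennreal (indicator {real n..<real n + 1} t) * c \<partial>lborel) = c"
  by (subst mult.commute) (simp add: ennreal_indicator nn_integral_cmult_indicator)

lemma nn_integral_le_suminf_antimono:
  fixes f :: "real \<Rightarrow> real"
  assumes f: "antimono_on {0..} f"
  shows "(\<integral>\<^sup>+t. ennreal (indicator {0..} t * f t) \<partial>lborel) \<le> (\<Sum>n. ennreal (f (real n)))"
proof -
  have "(\<integral>\<^sup>+t. ennreal (indicator {0..} t * f t) \<partial>lborel) \<le>
        (\<integral>\<^sup>+t. (\<Sum>n. ennreal (indicator {real n..<real n + 1} t) * ennreal (f (real n))) \<partial>lborel)"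
  proof (rule nn_integral_mono)
    fix t :: real
    have "0 \<le> t \<Longrightarrow> f t \<le> f (real (nat \<lfloor>t\<rfloor>))"
      by (rule monotone_onD[OF f]) auto
    then show "ennreal (indicator {0..} t * f t) \<le>
        (\<Sum>n. ennreal (indicator {real n..<real n + 1} t) * ennreal (f (real n)))"
      by (simp add: suminf_indicator_unit_intervals ennreal_leI)
  qed
  also have "\<dots> = (\<Sum>n. \<integral>\<^sup>+t. ennreal (indicator {real n..<real n + 1} t) * ennreal (f (real n)) \<partial>lborel)"
    by (rule nn_integral_suminf) auto
  finally show ?thesis by (simp add: nn_integral_indicator_unit_interval)
qed

lemma suminf_Suc_le_nn_integral_antimono:
  fixes f :: "real \<Rightarrow> real"
  assumes f: "antimono_on {0..} f"
  shows "(\<Sum>n. ennreal (f (real (Suc n)))) \<le> (\<integral>\<^sup>+t. ennreal (indicator {0..} t * f t) \<partial>lborel)"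
proof -
  have "(\<Sum>n. ennreal (f (real (Suc n)))) =
        (\<Sum>n. \<integral>\<^sup>+t. ennreal (indicator {real n..<real n + 1} t) * ennreal (f (real (Suc n))) \<partial>lborel)"
    by (simp add: nn_integral_indicator_unit_interval)
  also have "\<dots> = (\<integral>\<^sup>+t. (\<Sum>n. ennreal (indicator {real n..<real n + 1} t) * ennreal (f (real (Suc n)))) \<partial>lborel)"
    by (rule nn_integral_suminf[symmetric]) auto
  also have "\<dots> \<le> (\<integral>\<^sup>+t. ennreal (indicator {0..} t * f t) \<partial>lborel)"
  proof (rule nn_integral_mono)
    fix t :: real
    have "0 \<le> t \<Longrightarrow> f (real (Suc (nat \<lfloor>t\<rfloor>))) \<le> f t"
      by (intro monotone_onD[OF f]) (auto, linarith)
    then show "(\<Sum>n. ennreal (indicator {real n..<real n + 1} t) * ennreal (f (real (Suc n)))) \<le>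
        ennreal (indicator {0..} t * f t)"
      by (simp add: suminf_indicator_unit_intervals ennreal_leI)
  qed
  finally show ?thesis .
qed

lemma suminf_ennreal_split_head:
  fixes g :: "nat \<Rightarrow> ennreal"
  shows "(\<Sum>n. g n) = g 0 + (\<Sum>n. g (Suc n))"
proof -
  have "(\<lambda>n. g (Suc n)) sums (\<Sum>n. g (Suc n))" by (rule summable_sums) simp
  then have "g sums ((\<Sum>n. g (Suc n)) + g 0)" by (rule sums_Suc)
  then show ?thesis by (simp add: sums_iff add.commute)
qed

lemma nn_integral_half_gaussian:
  fixes y :: real assumes y: "y > 0"
  shows "(\<integral>\<^sup>+t. ennreal (indicator {0..} t * exp (-(y * t\<^sup>2))) \<partial>lborel) = ennreal (sqrt (pi / y) / 2)"
proof -
  have H: "(\<integral>\<^sup>+u. ennreal (indicator {0..} u *\<^sub>R exp (- u\<^sup>2)) \<partial>lborel) = ennreal (sqrt pi / 2)"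
    using gaussian_moment_0 unfolding has_bochner_integral_iff
    by (subst nn_integral_eq_integral) (auto simp: indicator_def)
  have "(\<integral>\<^sup>+u. ennreal (indicator {0..} u *\<^sub>R exp (- u\<^sup>2)) \<partial>lborel) =
      ennreal \<bar>sqrt y\<bar> * (\<integral>\<^sup>+x. ennreal (indicator {0..} (0 + sqrt y * x) *\<^sub>R exp (- (0 + sqrt y * x)\<^sup>2)) \<partial>lborel)"
    by (rule nn_integral_real_affine) (use y in auto)
  also have "(\<lambda>x. ennreal (indicator {0..} (0 + sqrt y * x) *\<^sub>R exp (- (0 + sqrt y * x)\<^sup>2))) =
      (\<lambda>x. ennreal (indicator {0..} x * exp (-(y * x\<^sup>2))))"
    using y by (auto simp: fun_eq_iff indicator_def power_mult_distrib zero_le_mult_iff)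
  finally have "ennreal (sqrt y) * (\<integral>\<^sup>+t. ennreal (indicator {0..} t * exp (-(y * t\<^sup>2))) \<partial>lborel) = ennreal (sqrt pi / 2)"
    using H y by simp
  then have "ennreal (1 / sqrt y) * (ennreal (sqrt y) * (\<integral>\<^sup>+t. ennreal (indicator {0..} t * exp (-(y * t\<^sup>2))) \<partial>lborel))
     = ennreal (1 / sqrt y) * ennreal (sqrt pi / 2)" by simp
  also have "ennreal (1 / sqrt y) * (ennreal (sqrt y) * X) = X" for X
    using y by (simp add: mult.assoc[symmetric] ennreal_mult[symmetric])
  also have "ennreal (1 / sqrt y) * ennreal (sqrt pi / 2) = ennreal (sqrt (pi / y) / 2)"
    using y by (simp add: ennreal_mult[symmetric] real_sqrt_divide)
  finally show ?thesis .
qed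

definition theta :: "real \<Rightarrow> ennreal" where
  "theta y = (\<integral>\<^sup>+k. ennreal (exp (-(y * (real_of_int k)\<^sup>2))) \<partial>count_space (UNIV::int set))"

lemma theta_eq_suminf:
  "theta y = (\<Sum>n. ennreal (exp (-(y * (real n)\<^sup>2)))) + (\<Sum>n. ennreal (exp (-(y * (real (Suc n))\<^sup>2))))"
proof -
  define h where "h k = ennreal (exp (-(y * (real_of_int k)\<^sup>2)))" for k :: int
  define A where "A = range (int :: nat \<Rightarrow> int)"
  define B where "B = range (\<lambda>n::nat. - int (Suc n))"
  have AB: "indicator A k + indicator B k = (1::ennreal)" for k
  proof (cases "k \<ge> 0")
    case True
    then have "k \<in> A" "k \<notin> B" unfolding A_def B_def by (auto intro: range_eqI[of _ _ "nat k"])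
    then show ?thesis by simp
  next
    case False
    then have "k \<notin> A" "k \<in> B" unfolding A_def B_def by (auto intro!: range_eqI[of _ _ "nat (-k) - 1"])
    then show ?thesis by simp
  qed
  have "theta y = (\<integral>\<^sup>+k. h k * indicator A k + h k * indicator B k \<partial>count_space UNIV)"
    unfolding theta_def h_def by (intro nn_integral_cong) (metis AB distrib_left mult.right_neutral)
  also have "\<dots> = (\<integral>\<^sup>+k. h k \<partial>count_space A) + (\<integral>\<^sup>+k. h k \<partial>count_space B)"
    by (subst nn_integral_add) (auto simp: nn_integral_count_space_indicator)
  also have "(\<integral>\<^sup>+k. h k \<partial>count_space A) = (\<integral>\<^sup>+n. h (int n) \<partial>count_space UNIV)"
    unfolding A_def by (rule nn_integral_bij_count_space[symmetric]) (simp add: bij_betw_def)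
  also have "(\<integral>\<^sup>+k. h k \<partial>count_space B) = (\<integral>\<^sup>+n. h (- int (Suc n)) \<partial>count_space UNIV)"
    unfolding B_def by (rule nn_integral_bij_count_space[symmetric]) (simp add: bij_betw_def inj_on_def)
  finally show ?thesis
    by (simp add: nn_integral_count_space_nat h_def power2_eq_square algebra_simps)
qed

lemma theta_bounds:
  fixes y :: real assumes y: "y > 0"
  shows "theta y \<le> ennreal (sqrt (pi / y) + 1)" and "ennreal (sqrt (pi / y)) \<le> theta y + 1"
proof -
  define S0 where "S0 = (\<Sum>n. ennreal (exp (-(y * (real n)\<^sup>2))))"
  define S1 where "S1 = (\<Sum>n. ennreal (exp (-(y * (real (Suc n))\<^sup>2))))"
  define I where "I = (\<integral>\<^sup>+t. ennreal (indicator {0..} t * exp (-(y * t\<^sup>2))) \<partial>lborel)"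
  have mono: "antimono_on {0..} (\<lambda>t. exp (-(y * t\<^sup>2)))"
    using y by (intro monotone_onI) (auto intro: power_mono)
  have T: "theta y = S0 + S1" unfolding S0_def S1_def by (rule theta_eq_suminf)
  have S0: "S0 = 1 + S1" unfolding S0_def S1_def by (subst suminf_ennreal_split_head) simp
  have upper: "I \<le> S0" unfolding I_def S0_def by (rule nn_integral_le_suminf_antimono[OF mono])
  have lower: "S1 \<le> I" unfolding I_def S1_def by (rule suminf_Suc_le_nn_integral_antimono[OF mono])
  have II: "I + I = ennreal (sqrt (pi / y))"
    unfolding I_def nn_integral_half_gaussian[OF y] using y by (subst ennreal_plus[symmetric]) auto
  have "theta y \<le> (1 + I) + I" unfolding T S0 using lower by (intro add_mono) auto
  also have "\<dots> = ennreal (sqrt (pi / y)) + 1" using II by (simp add: ac_simps)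
  also have "\<dots> = ennreal (sqrt (pi / y) + 1)" using y by (subst ennreal_plus) auto
  finally show "theta y \<le> ennreal (sqrt (pi / y) + 1)" .
  have "ennreal (sqrt (pi / y)) = I + I" using II by simp
  also have "\<dots> \<le> S0 + (1 + S1)" using upper lower S0 by (intro add_mono) auto
  also have "\<dots> = theta y + 1" unfolding T by (simp add: ac_simps)
  finally show "ennreal (sqrt (pi / y)) \<le> theta y + 1" .
qed

lemma theta_neq_top: "y > 0 \<Longrightarrow> theta y \<noteq> \<infinity>"
  using theta_bounds(1)[of y] by (auto simp: top_unique)

lemma abs_enn2real_theta_minus_sqrt_le:
  fixes y :: real assumes y: "y > 0"
  shows "\<bar>enn2real (theta y) - sqrt (pi / y)\<bar> \<le> 1"
proof -
  have eq: "theta y = ennreal (enn2real (theta y))"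
    using theta_neq_top[OF y] by (simp add: ennreal_enn2real_if)
  have "ennreal (enn2real (theta y)) \<le> ennreal (sqrt (pi / y) + 1)"
    using theta_bounds(1)[OF y] eq by simp
  then have 1: "enn2real (theta y) \<le> sqrt (pi / y) + 1"
    using y by (subst (asm) ennreal_le_iff) auto
  have "ennreal (sqrt (pi / y)) \<le> ennreal (enn2real (theta y) + 1)"
    using theta_bounds(2)[OF y] eq by (metis ennreal_plus enn2real_nonneg zero_less_one less_imp_le ennreal_1)
  then have 2: "sqrt (pi / y) \<le> enn2real (theta y) + 1"
    by (subst (asm) ennreal_le_iff) auto
  show ?thesis using 1 2 by linarith
qed

lemma theta_measurable [measurable]: "theta \<in> borel_measurable borel"
proof -
  have "(\<lambda>z::real \<times> int. ennreal (exp (-(fst z * (real_of_int (snd z))\<^sup>2))))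
          \<in> borel_measurable (borel \<Otimes>\<^sub>M count_space UNIV)"
    by (rule measurable_compose_countable[where f = "\<lambda>k z. ennreal (exp (-(fst z * (real_of_int k)\<^sup>2)))" and g = snd]) auto
  then have "(\<lambda>y. \<integral>\<^sup>+k. ennreal (exp (-(y * (real_of_int k)\<^sup>2))) \<partial>count_space (UNIV::int set))
               \<in> borel_measurable borel"
    by (intro sigma_finite_measure.borel_measurable_nn_integral[OF sigma_finite_measure_count_space])
       (simp add: case_prod_beta')
  then show ?thesis unfolding theta_def[abs_def] .
qed

section \<open>A Mellin-type representation of the lattice sum\<close>

lemma nn_integral_Gamma_scaled:
  fixes s c :: real assumes s: "s > 0" and c: "c > 0"
  shows "(\<integral>\<^sup>+x. ennreal (indicator {0..} x * x powr (s-1) * exp (-(c*x))) \<partial>lborel) = ennreal (Gamma s * c powr (-s))"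
proof -
  define h where "h x = ennreal (indicator {0..} x * x powr (s-1) * exp (-(c*x)))" for x :: real
  have "ennreal (Gamma s) = (\<integral>\<^sup>+t. ennreal (indicator {0..} t * t powr (s - 1) / exp t) \<partial>lborel)"
    using Gamma_conv_nn_integral_real[OF s] by simp
  also have "\<dots> = ennreal \<bar>c\<bar> * (\<integral>\<^sup>+x. ennreal (indicator {0..} (0 + c * x) * (0 + c * x) powr (s - 1) / exp (0 + c * x)) \<partial>lborel)"
    by (rule nn_integral_real_affine) (use c in auto)
  also have "(\<lambda>x. ennreal (indicator {0..} (0 + c * x) * (0 + c * x) powr (s - 1) / exp (0 + c * x))) =
      (\<lambda>x. ennreal (c powr (s-1)) * h x)"
  proof
    fix x :: real
    show "ennreal (indicator {0..} (0 + c * x) * (0 + c * x) powr (s - 1) / exp (0 + c * x)) = ennreal (c powr (s-1)) * h x"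
      unfolding h_def using c
      by (cases "x \<ge> 0") (auto simp: indicator_def powr_mult zero_le_mult_iff exp_minus field_simps ennreal_mult[symmetric])
  qed
  also have "(\<integral>\<^sup>+x. ennreal (c powr (s-1)) * h x \<partial>lborel) = ennreal (c powr (s-1)) * (\<integral>\<^sup>+x. h x \<partial>lborel)"
    by (rule nn_integral_cmult) (auto simp: h_def)
  finally have "ennreal (Gamma s) = ennreal (c powr s) * (\<integral>\<^sup>+x. h x \<partial>lborel)"
    using c by (simp add: mult.assoc[symmetric] ennreal_mult[symmetric] powr_mult_base)
  then have "ennreal (c powr (-s)) * ennreal (Gamma s) = ennreal (c powr (-s)) * ennreal (c powr s) * (\<integral>\<^sup>+x. h x \<partial>lborel)"
    by (simp add: mult.assoc)
  also have "ennreal (c powr (-s)) * ennreal (c powr s) = 1"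
    using c by (simp add: ennreal_mult[symmetric] powr_add[symmetric])
  finally show ?thesis unfolding h_def using c Gamma_real_pos[OF s]
    by (simp add: ennreal_mult[symmetric] mult.commute mult.left_commute)
qed

lemma nn_integral_Gamma_shifted:
  fixes s t :: real assumes "s - t > 0"
  shows "(\<integral>\<^sup>+x. ennreal (indicator {0..} x * x powr (s-1) / exp x * x powr (-t)) \<partial>lborel) = ennreal (Gamma (s - t))"
proof -
  have "(\<lambda>x. ennreal (indicator {0..} x * x powr (s-1) / exp x * x powr (-t))) =
       (\<lambda>x. ennreal (indicator {0..} x * x powr ((s - t) - 1) / exp x))"
  proof
    fix x :: real
    show "ennreal (indicator {0..} x * x powr (s-1) / exp x * x powr (-t)) = ennreal (indicator {0..} x * x powr ((s - t) - 1) / exp x)"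
    proof -
      have e: "s - 1 - t = s - t - 1" by simp
      show ?thesis by (cases "x > 0"; cases "x = 0") (auto simp: indicator_def powr_add[symmetric] e)
    qed
  qed
  then show ?thesis using Gamma_conv_nn_integral_real[OF assms] by simp
qed

lemma nn_integral_count_space_vec_prod:
  fixes g :: "'n::finite \<Rightarrow> int \<Rightarrow> ennreal"
  shows "(\<integral>\<^sup>+k. (\<Prod>i\<in>UNIV. g i ((k::int^'n)$i)) \<partial>count_space UNIV) = (\<Prod>i\<in>UNIV. \<integral>\<^sup>+j. g i j \<partial>count_space UNIV)"
proof -
  interpret product_sigma_finite "\<lambda>_::'n. count_space (UNIV::int set)"
    by (intro product_sigma_finite.intro sigma_finite_measure_count_space)
  have bij: "bij_betw vec_nth UNIV (UNIV :: ('n \<Rightarrow> int) set)"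
    by (rule bij_betwI[where g = vec_lambda]) auto
  have "(\<integral>\<^sup>+k. (\<Prod>i\<in>UNIV. g i ((k::int^'n)$i)) \<partial>count_space UNIV) =
      (\<integral>\<^sup>+x. (\<Prod>i\<in>UNIV. g i (x i)) \<partial>count_space UNIV)"
    by (rule nn_integral_bij_count_space[OF bij, of "\<lambda>x. \<Prod>i\<in>UNIV. g i (x i)"])
  also have "count_space (UNIV :: ('n \<Rightarrow> int) set) = PiM UNIV (\<lambda>_. count_space UNIV)"
    by (subst count_space_PiM_finite) (auto simp: PiE_UNIV_domain)
  also have "(\<integral>\<^sup>+x. (\<Prod>i\<in>UNIV. g i (x i)) \<partial>PiM UNIV (\<lambda>_. count_space UNIV)) = (\<Prod>i\<in>UNIV. \<integral>\<^sup>+j. g i j \<partial>count_space UNIV)"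
    by (rule product_nn_integral_prod) auto
  finally show ?thesis .
qed

lemma quad_form_ge_1: "quad_form a k \<ge> 1"
  unfolding quad_form_def by (auto intro!: sum_nonneg)

lemma quad_form_pos: "quad_form a k > 0"
  using quad_form_ge_1[of a k] by linarith

lemma quad_form_uminus: "quad_form a (-k) = quad_form a k"
  unfolding quad_form_def by simp

lemma of_int_sq_le_quad_form:
  assumes "a$i > 0"
  shows "(real_of_int (k$i))\<^sup>2 \<le> (a$i)\<^sup>2 * quad_form a k"
proof -
  have "(real_of_int (k$i))\<^sup>2 / (a$i)\<^sup>2 \<le> (\<Sum>j\<in>UNIV. (real_of_int (k$j))\<^sup>2 / (a$j)\<^sup>2)"
    by (rule member_le_sum) auto
  also have "\<dots> \<le> quad_form a k" unfolding quad_form_def by simp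
  finally show ?thesis using assms by (simp add: divide_le_eq mult.commute)
qed

lemma exp_neg_quad_form_mult:
  "exp (-(quad_form a k * x)) = exp (-x) * (\<Prod>i\<in>UNIV. exp (-(x / (a$i)\<^sup>2 * (real_of_int (k$i))\<^sup>2)))"
proof -
  have "-(quad_form a k * x) = -x + (\<Sum>i\<in>UNIV. -(x / (a$i)\<^sup>2 * (real_of_int (k$i))\<^sup>2))"
    unfolding quad_form_def by (simp add: algebra_simps sum_distrib_left sum_negf)
  then show ?thesis by (simp only: exp_add exp_sum[OF finite])
qed

lemma Gamma_mult_nn_integral_quad_form:
  fixes a :: "real^'n" and s :: real
  assumes s: "s > 0"
  shows "ennreal (Gamma s) * (\<integral>\<^sup>+k. ennreal (quad_form a k powr (-s)) \<partial>count_space UNIV) =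
    (\<integral>\<^sup>+x. ennreal (indicator {0..} x * x powr (s-1) / exp x) * (\<Prod>i\<in>UNIV. theta (x / (a$i)\<^sup>2)) \<partial>lborel)"
proof -
  define g where "g x = indicator {0..} x * x powr (s-1) / exp x" for x :: real
  define e where "e x i j = ennreal (exp (-(x / (a$i)\<^sup>2 * (real_of_int j)\<^sup>2)))" for x i j
  have "ennreal (Gamma s) * (\<integral>\<^sup>+k. ennreal (quad_form a k powr (-s)) \<partial>count_space UNIV) =
      (\<integral>\<^sup>+k. ennreal (Gamma s * quad_form a k powr (-s)) \<partial>count_space UNIV)"
    using s by (subst nn_integral_cmult[symmetric]) (auto simp: ennreal_mult)
  also have "\<dots> = (\<integral>\<^sup>+k. \<integral>\<^sup>+x. ennreal (indicator {0..} x * x powr (s-1) * exp (-(quad_form a k * x))) \<partial>lborel \<partial>count_space UNIV)"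
    by (simp only: nn_integral_Gamma_scaled[OF s quad_form_pos])
  also have "\<dots> = (\<integral>\<^sup>+x. \<integral>\<^sup>+k. ennreal (indicator {0..} x * x powr (s-1) * exp (-(quad_form a k * x))) \<partial>count_space UNIV \<partial>lborel)"
    by (rule nn_integral_count_space_nn_integral[symmetric]) auto
  also have "\<dots> = (\<integral>\<^sup>+x. \<integral>\<^sup>+k. ennreal (g x) * (\<Prod>i\<in>UNIV. e x i ((k::int^'n)$i)) \<partial>count_space UNIV \<partial>lborel)"
  proof (intro nn_integral_cong)
    fix x :: real and k :: "int^'n"
    have "indicator {0..} x * x powr (s-1) * exp (-(quad_form a k * x)) =
          g x * (\<Prod>i\<in>UNIV. exp (-(x / (a$i)\<^sup>2 * (real_of_int (k$i))\<^sup>2)))"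
      unfolding exp_neg_quad_form_mult g_def by (simp add: exp_minus divide_inverse mult_ac)
    moreover have "g x \<ge> 0" by (simp add: g_def)
    ultimately show "ennreal (indicator {0..} x * x powr (s-1) * exp (-(quad_form a k * x))) =
          ennreal (g x) * (\<Prod>i\<in>UNIV. e x i (k$i))"
      by (simp add: e_def ennreal_mult prod_ennreal prod_nonneg)
  qed
  also have "\<dots> = (\<integral>\<^sup>+x. ennreal (g x) * (\<Prod>i\<in>UNIV. theta (x / (a$i)\<^sup>2)) \<partial>lborel)"
  proof (intro nn_integral_cong)
    fix x :: real
    have "(\<integral>\<^sup>+k. (\<Prod>i\<in>UNIV. e x i ((k::int^'n)$i)) \<partial>count_space UNIV) = (\<Prod>i\<in>UNIV. theta (x / (a$i)\<^sup>2))"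
      unfolding nn_integral_count_space_vec_prod[of "e x"] by (simp add: theta_def e_def[abs_def])
    then show "(\<integral>\<^sup>+k. ennreal (g x) * (\<Prod>i\<in>UNIV. e x i ((k::int^'n)$i)) \<partial>count_space UNIV) =
        ennreal (g x) * (\<Prod>i\<in>UNIV. theta (x / (a$i)\<^sup>2))"
      by (simp add: nn_integral_cmult e_def)
  qed
  finally show ?thesis unfolding g_def .
qed

section \<open>Asymptotics of the lattice sum\<close>

lemma abs_prod_diff_le:
  fixes A B :: "'i \<Rightarrow> real"
  assumes "finite I" "K \<ge> 0" "\<delta> \<ge> 0"
    and "\<And>i. i \<in> I \<Longrightarrow> 0 \<le> A i \<and> A i \<le> K \<and> 0 \<le> B i \<and> B i \<le> K \<and> \<bar>A i - B i\<bar> \<le> \<delta>"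
  shows "\<bar>prod A I - prod B I\<bar> \<le> real (card I) * K ^ (card I - 1) * \<delta>"
  using assms(1,4)
proof (induction I rule: finite_induct)
  case empty
  then show ?case by simp
next
  case (insert j F)
  let ?n = "card F"
  have IH: "\<bar>prod A F - prod B F\<bar> \<le> real ?n * K ^ (?n - 1) * \<delta>" using insert by auto
  have Aj: "0 \<le> A j" "A j \<le> K" "\<bar>A j - B j\<bar> \<le> \<delta>" using insert.prems by auto
  have PB: "\<bar>prod B F\<bar> \<le> K ^ ?n"
  proof -
    have "\<bar>prod B F\<bar> = (\<Prod>i\<in>F. \<bar>B i\<bar>)" by (simp add: abs_prod)
    also have "\<dots> \<le> (\<Prod>i\<in>F. K)" by (rule prod_mono) (use insert.prems in auto)
    finally show ?thesis by simp
  qed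
  have "prod A (insert j F) - prod B (insert j F) = A j * (prod A F - prod B F) + (A j - B j) * prod B F"
    using insert by (simp add: algebra_simps)
  also have "\<bar>\<dots>\<bar> \<le> \<bar>A j\<bar> * \<bar>prod A F - prod B F\<bar> + \<bar>A j - B j\<bar> * \<bar>prod B F\<bar>"
    by (metis abs_mult abs_triangle_ineq)
  also have "\<dots> \<le> K * (real ?n * K ^ (?n - 1) * \<delta>) + \<delta> * K ^ ?n"
    using Aj IH PB assms(2,3) by (intro add_mono mult_mono) auto
  also have "K * (real ?n * K ^ (?n - 1) * \<delta>) = real ?n * K ^ ?n * \<delta>"
    by (cases ?n) (auto simp: algebra_simps)
  also have "real ?n * K ^ ?n * \<delta> + \<delta> * K ^ ?n = real (card (insert j F)) * K ^ (card (insert j F) - 1) * \<delta>"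
    using insert by (simp add: algebra_simps)
  finally show ?case .
qed

lemma one_plus_sqrt_pi_div_power_le:
  fixes x :: real and n :: nat assumes x: "x > 0"
  shows "(1 + sqrt (pi / x)) ^ n \<le> 3 ^ n * (1 + x powr (- (real n / 2)))"
proof (cases "x \<ge> 1")
  case True
  have "sqrt (pi / x) \<le> sqrt pi" using True x by (auto intro!: divide_left_mono simp: field_simps)
  also have "sqrt pi \<le> 2" using pi_less_4 real_sqrt_le_mono[of pi 4] by simp
  finally have "(1 + sqrt (pi / x)) ^ n \<le> 3 ^ n" using x by (intro power_mono) auto
  also have "\<dots> \<le> 3 ^ n * (1 + x powr (- (real n / 2)))" by simp
  finally show ?thesis .
next
  case False
  have sx: "sqrt x > 0" "sqrt x \<le> 1" using x False by auto
  have "sqrt (pi / x) = sqrt pi / sqrt x" by (simp add: real_sqrt_divide)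
  also have "\<dots> \<le> 2 / sqrt x"
    using sx pi_less_4 real_sqrt_le_mono[of pi 4] by (intro divide_right_mono) auto
  finally have h2: "sqrt (pi / x) \<le> 2 / sqrt x" .
  have h1: "1 \<le> 1 / sqrt x" using sx by (simp add: field_simps)
  have h3: "2 / sqrt x = 2 * (1 / sqrt x)" by simp
  have "1 + sqrt (pi / x) \<le> 3 * (1 / sqrt x)" using h1 h2 h3 by linarith
  then have "(1 + sqrt (pi / x)) ^ n \<le> (3 * (1 / sqrt x)) ^ n" using x by (intro power_mono) auto
  also have "(3 * (1 / sqrt x)) ^ n = 3 ^ n * x powr (- (real n / 2))"
  proof -
    have "(1 / sqrt x) = x powr (-(1/2))" using x by (simp add: powr_minus_divide powr_half_sqrt)
    then have "(1 / sqrt x) ^ n = (x powr (-(1/2))) powr (real n)" using x by (simp add: powr_realpow)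
    also have "\<dots> = x powr (- (real n / 2))" by (simp add: powr_powr)
    finally show ?thesis by (simp only: power_mult_distrib)
  qed
  also have "\<dots> \<le> 3 ^ n * (1 + x powr (- (real n / 2)))" by simp
  finally show ?thesis .
qed

lemma sqrt_power_eq_powr:
  fixes y :: real assumes "y > 0"
  shows "sqrt y ^ n = y powr (real n / 2)"
  using assms by (simp add: powr_half_sqrt[symmetric] powr_realpow[symmetric] powr_powr)

lemma abs_theta_scaled_minus_sqrt_le:
  fixes x c :: real assumes x: "x > 0" and c: "c > 0"
  shows "\<bar>enn2real (theta (x / c\<^sup>2)) / c - sqrt (pi / x)\<bar> \<le> 1 / c"
proof -
  have "pi / (x / c\<^sup>2) = c\<^sup>2 * (pi / x)" using c by (simp add: field_simps)
  then have "sqrt (pi / (x / c\<^sup>2)) = sqrt (c\<^sup>2) * sqrt (pi / x)" by (simp only: real_sqrt_mult)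
  also have "sqrt (c\<^sup>2) = c" using c by simp
  finally have "\<bar>enn2real (theta (x / c\<^sup>2)) - c * sqrt (pi / x)\<bar> \<le> 1"
    using abs_enn2real_theta_minus_sqrt_le[of "x / c\<^sup>2"] x c by simp
  moreover have "enn2real (theta (x / c\<^sup>2)) / c - sqrt (pi / x) =
      (enn2real (theta (x / c\<^sup>2)) - c * sqrt (pi / x)) / c"
    using c by (simp add: field_simps)
  ultimately show ?thesis using c by (simp add: abs_divide divide_right_mono)
qed

lemma abs_prod_theta_scaled_minus_sqrt_power_le:
  fixes a :: "real^'n" and x M :: real
  assumes x: "x > 0" and M: "M \<ge> 1" and a: "\<forall>i. a$i \<ge> M"
  shows "\<bar>(\<Prod>i\<in>UNIV. enn2real (theta (x / (a$i)\<^sup>2)) / a$i) - sqrt (pi / x) ^ CARD('n)\<bar>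
           \<le> real CARD('n) * 3 ^ (CARD('n) - 1) * (1 + x powr (- (real (CARD('n) - 1) / 2))) / M"
proof -
  define d where "d = CARD('n)"
  define A where "A i = enn2real (theta (x / (a$i)\<^sup>2)) / a$i" for i
  define B where "B = sqrt (pi / x)"
  have apos: "a$i > 0" for i using a M by (smt (verit))
  have B0: "0 \<le> B" unfolding B_def using x by simp
  have AB: "\<bar>A i - B\<bar> \<le> 1 / M" for i
  proof -
    have "\<bar>A i - B\<bar> \<le> 1 / a$i"
      unfolding A_def B_def by (rule abs_theta_scaled_minus_sqrt_le[OF x apos])
    also have "\<dots> \<le> 1 / M" using a apos[of i] M by (intro divide_left_mono) (auto intro!: mult_pos_pos)
    finally show ?thesis .
  qed
  have A: "0 \<le> A i \<and> A i \<le> 1 + B" for i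
  proof
    show "0 \<le> A i" unfolding A_def using apos[of i] by simp
    have "1 / M \<le> 1" using M by simp
    then show "A i \<le> 1 + B" using AB[of i] by linarith
  qed
  have "\<bar>(\<Prod>i\<in>UNIV. A i) - (\<Prod>i\<in>(UNIV::'n set). B)\<bar> \<le> real d * (1 + B) ^ (d - 1) * (1 / M)"
    unfolding d_def by (rule abs_prod_diff_le) (use A AB B0 M in auto)
  also have "(1 + B) ^ (d - 1) \<le> 3 ^ (d - 1) * (1 + x powr (- (real (d - 1) / 2)))"
    unfolding B_def by (rule one_plus_sqrt_pi_div_power_le[OF x])
  finally show ?thesis
    using M by (simp add: A_def B_def d_def divide_right_mono mult_left_mono)
qed

(* At x = 0 this relies on the convention 0 powr a = 0. *)
lemma Gamma_density_nonpos:
  fixes x s :: real assumes "x \<le> 0"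
  shows "indicator {0..} x * x powr (s - 1) / exp x = 0"
  using assms by (cases "x = 0") (auto simp: indicator_def)

lemma Gamma_mult_nn_integral_quad_form_rescaled:
  fixes a :: "real^'n" and s :: real
  assumes s: "s > 0" and a: "\<forall>i. a$i > 0"
  shows "ennreal (Gamma s) * (\<integral>\<^sup>+k. ennreal (quad_form a k powr (-s)) \<partial>count_space UNIV) =
    ennreal (\<Prod>i\<in>UNIV. a$i) * (\<integral>\<^sup>+x. ennreal (indicator {0..} x * x powr (s - 1) / exp x *
      (\<Prod>i\<in>UNIV. enn2real (theta (x / (a$i)\<^sup>2)) / a$i)) \<partial>lborel)"
proof -
  define g where "g x = indicator {0..} x * x powr (s - 1) / exp x" for x :: real
  define A where "A x = (\<Prod>i\<in>UNIV. enn2real (theta (x / (a$i)\<^sup>2)) / a$i)" for x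
  define P where "P = (\<Prod>i\<in>UNIV. a$i)"
  have apos: "a$i > 0" for i using a by simp
  have P0: "P > 0" unfolding P_def using apos by (simp add: prod_pos)
  have g0: "0 \<le> g x" for x by (simp add: g_def)
  have A0: "0 \<le> A x" for x unfolding A_def using apos by (intro prod_nonneg) (simp add: less_imp_le)
  have "ennreal (Gamma s) * (\<integral>\<^sup>+k. ennreal (quad_form a k powr (-s)) \<partial>count_space UNIV) =
      (\<integral>\<^sup>+x. ennreal (g x) * (\<Prod>i\<in>UNIV. theta (x / (a$i)\<^sup>2)) \<partial>lborel)"
    unfolding g_def by (rule Gamma_mult_nn_integral_quad_form[OF s])
  also have "\<dots> = (\<integral>\<^sup>+x. ennreal P * ennreal (g x * A x) \<partial>lborel)"
  proof (intro nn_integral_cong)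
    fix x :: real
    show "ennreal (g x) * (\<Prod>i\<in>UNIV. theta (x / (a$i)\<^sup>2)) = ennreal P * ennreal (g x * A x)"
    proof (cases "x > 0")
      case True
      have "theta (x / (a$i)\<^sup>2) = ennreal (enn2real (theta (x / (a$i)\<^sup>2)))" for i
        using True apos[of i] theta_neq_top[of "x / (a$i)\<^sup>2"] by (simp add: ennreal_enn2real_if)
      then have "(\<Prod>i\<in>UNIV. theta (x / (a$i)\<^sup>2)) = (\<Prod>i\<in>UNIV. ennreal (enn2real (theta (x / (a$i)\<^sup>2))))"
        by (intro prod.cong) auto
      also have "\<dots> = ennreal (\<Prod>i\<in>UNIV. enn2real (theta (x / (a$i)\<^sup>2)))"
        by (rule prod_ennreal) simp
      also have "(\<Prod>i\<in>UNIV. enn2real (theta (x / (a$i)\<^sup>2))) = P * A x"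
        unfolding P_def A_def using apos by (simp add: prod.distrib[symmetric] less_imp_neq[symmetric])
      finally show ?thesis using P0 g0 A0 by (simp add: ennreal_mult mult_ac)
    qed (simp add: g_def Gamma_density_nonpos)
  qed
  also have "\<dots> = ennreal P * (\<integral>\<^sup>+x. ennreal (g x * A x) \<partial>lborel)"
    by (rule nn_integral_cmult) (simp add: g_def A_def)
  finally show ?thesis unfolding g_def A_def P_def .
qed

lemma nn_integral_Gamma_density_sqrt_power:
  fixes s :: real assumes s: "s > real d / 2"
  shows "(\<integral>\<^sup>+x. ennreal (indicator {0..} x * x powr (s-1) / exp x * sqrt (pi / x) ^ d) \<partial>lborel) =
         ennreal (pi powr (real d / 2) * Gamma (s - real d / 2))"
proof -
  have "(\<integral>\<^sup>+x. ennreal (indicator {0..} x * x powr (s-1) / exp x * sqrt (pi / x) ^ d) \<partial>lborel) =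
        (\<integral>\<^sup>+x. ennreal (pi powr (real d / 2)) *
                 ennreal (indicator {0..} x * x powr (s-1) / exp x * x powr (- (real d / 2))) \<partial>lborel)"
  proof (intro nn_integral_cong)
    fix x :: real
    show "ennreal (indicator {0..} x * x powr (s-1) / exp x * sqrt (pi / x) ^ d) =
          ennreal (pi powr (real d / 2)) *
          ennreal (indicator {0..} x * x powr (s-1) / exp x * x powr (- (real d / 2)))"
    proof (cases "x > 0")
      case True
      then have "sqrt (pi / x) ^ d = pi powr (real d / 2) * x powr (- (real d / 2))"
        by (simp add: sqrt_power_eq_powr powr_divide powr_minus_divide)
      then show ?thesis by (simp add: ennreal_mult[symmetric] mult_ac)
    qed (simp add: Gamma_density_nonpos)
  qed
  also have "\<dots> = ennreal (pi powr (real d / 2)) *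
      (\<integral>\<^sup>+x. ennreal (indicator {0..} x * x powr (s-1) / exp x * x powr (- (real d / 2))) \<partial>lborel)"
    by (rule nn_integral_cmult) measurable
  also have "(\<integral>\<^sup>+x. ennreal (indicator {0..} x * x powr (s-1) / exp x * x powr (- (real d / 2))) \<partial>lborel) =
      ennreal (Gamma (s - real d / 2))"
    by (rule nn_integral_Gamma_shifted) (use s in simp)
  finally show ?thesis using s by (simp add: ennreal_mult)
qed

lemma nn_integral_Gamma_density_one_plus_powr:
  fixes s t :: real assumes s: "s > 0" and t: "s > t"
  shows "(\<integral>\<^sup>+x. ennreal (indicator {0..} x * x powr (s-1) / exp x * (1 + x powr (- t))) \<partial>lborel) =
         ennreal (Gamma s + Gamma (s - t))"
proof -
  have "(\<integral>\<^sup>+x. ennreal (indicator {0..} x * x powr (s-1) / exp x * (1 + x powr (- t))) \<partial>lborel) =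
        (\<integral>\<^sup>+x. ennreal (indicator {0..} x * x powr (s-1) / exp x) +
                 ennreal (indicator {0..} x * x powr (s-1) / exp x * x powr (- t)) \<partial>lborel)"
    by (intro nn_integral_cong) (simp add: ring_distribs)
  also have "\<dots> = (\<integral>\<^sup>+x. ennreal (indicator {0..} x * x powr (s-1) / exp x) \<partial>lborel) +
      (\<integral>\<^sup>+x. ennreal (indicator {0..} x * x powr (s-1) / exp x * x powr (- t)) \<partial>lborel)"
    by (rule nn_integral_add) auto
  also have "(\<integral>\<^sup>+x. ennreal (indicator {0..} x * x powr (s-1) / exp x) \<partial>lborel) = ennreal (Gamma s)"
    using Gamma_conv_nn_integral_real[OF s] by simp
  also have "(\<integral>\<^sup>+x. ennreal (indicator {0..} x * x powr (s-1) / exp x * x powr (- t)) \<partial>lborel) =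
      ennreal (Gamma (s - t))"
    by (rule nn_integral_Gamma_shifted) (use t in simp)
  finally show ?thesis using s t by simp
qed

lemma nn_integral_approx:
  fixes u v w :: "'a \<Rightarrow> real" and \<delta> L K :: real
  assumes [measurable]: "u \<in> borel_measurable M" "v \<in> borel_measurable M" "w \<in> borel_measurable M"
    and nonneg: "\<And>x. 0 \<le> u x" "\<And>x. 0 \<le> v x" "\<And>x. 0 \<le> w x" "0 \<le> \<delta>" "0 \<le> L" "0 \<le> K"
    and close: "\<And>x. \<bar>u x - v x\<bar> \<le> \<delta> * w x"
    and v: "(\<integral>\<^sup>+x. ennreal (v x) \<partial>M) = ennreal L" and w: "(\<integral>\<^sup>+x. ennreal (w x) \<partial>M) = ennreal K"
  shows "\<exists>J. (\<integral>\<^sup>+x. ennreal (u x) \<partial>M) = ennreal J \<and> 0 \<le> J \<and> \<bar>J - L\<bar> \<le> \<delta> * K"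
proof -
  have bound: "(\<integral>\<^sup>+x. ennreal (f x) \<partial>M) \<le> (\<integral>\<^sup>+x. ennreal (g x) \<partial>M) + ennreal (\<delta> * K)"
    if [measurable]: "f \<in> borel_measurable M" "g \<in> borel_measurable M"
      and fg: "\<And>x. f x \<le> g x + \<delta> * w x" and g0: "\<And>x. 0 \<le> g x" for f g
  proof -
    have "(\<integral>\<^sup>+x. ennreal (f x) \<partial>M) \<le> (\<integral>\<^sup>+x. ennreal (g x) + ennreal \<delta> * ennreal (w x) \<partial>M)"
      using fg g0 nonneg
      by (intro nn_integral_mono) (simp add: ennreal_mult[symmetric] ennreal_plus[symmetric] ennreal_leI del: ennreal_plus)
    also have "\<dots> = (\<integral>\<^sup>+x. ennreal (g x) \<partial>M) + ennreal (\<delta> * K)"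
      using nonneg by (simp add: nn_integral_add nn_integral_cmult w ennreal_mult)
    finally show ?thesis .
  qed
  have uv: "u x \<le> v x + \<delta> * w x" "v x \<le> u x + \<delta> * w x" for x
    using close[of x] by (auto simp: abs_le_iff)
  have upper: "(\<integral>\<^sup>+x. ennreal (u x) \<partial>M) \<le> ennreal (L + \<delta> * K)"
    using bound[of u v] uv nonneg by (simp add: v ennreal_plus)
  have lower: "ennreal L \<le> (\<integral>\<^sup>+x. ennreal (u x) \<partial>M) + ennreal (\<delta> * K)"
    using bound[of v u] uv nonneg by (simp add: v)
  obtain J where J: "(\<integral>\<^sup>+x. ennreal (u x) \<partial>M) = ennreal J" "0 \<le> J"
    using upper by (cases "\<integral>\<^sup>+x. ennreal (u x) \<partial>M" rule: ennreal_cases) (auto simp: top_unique)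
  have "J \<le> L + \<delta> * K" using upper nonneg unfolding J(1) by (subst (asm) ennreal_le_iff) auto
  moreover have "L \<le> J + \<delta> * K" using lower nonneg J by (simp add: ennreal_plus[symmetric] del: ennreal_plus)
  ultimately show ?thesis using J by (intro exI[of _ J]) auto
qed

lemma nn_integral_Gamma_density_theta_approx:
  fixes a :: "real^'n" and s M :: real
  assumes s: "s > real CARD('n) / 2" and M: "M \<ge> 1" and a: "\<forall>i. a$i \<ge> M"
  shows "\<exists>J. (\<integral>\<^sup>+x. ennreal (indicator {0..} x * x powr (s - 1) / exp x *
                 (\<Prod>i\<in>UNIV. enn2real (theta (x / (a$i)\<^sup>2)) / a$i)) \<partial>lborel) = ennreal J \<and> 0 \<le> J \<and>
      \<bar>J - pi powr (real CARD('n) / 2) * Gamma (s - real CARD('n) / 2)\<bar>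
        \<le> real CARD('n) * 3 ^ (CARD('n) - 1) / M * (Gamma s + Gamma (s - real (CARD('n) - 1) / 2))"
proof -
  define d where "d = CARD('n)"
  define t where "t = real (d - 1) / 2"
  define g where "g x = indicator {0..} x * x powr (s - 1) / exp x" for x :: real
  define A where "A x = (\<Prod>i\<in>UNIV. enn2real (theta (x / (a$i)\<^sup>2)) / a$i)" for x
  define L where "L = pi powr (real d / 2) * Gamma (s - real d / 2)"
  define K where "K = Gamma s + Gamma (s - t)"
  define \<delta> where "\<delta> = real d * 3 ^ (d - 1) / M"
  have d: "d \<ge> 1" unfolding d_def by (simp add: Suc_le_eq)
  have s0: "s > 0" and st: "s > t" and sd: "s > real d / 2"
    using s d by (simp_all add: d_def t_def of_nat_diff)
  have apos: "a$i > 0" for i using a M by (smt (verit))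
  have g0: "0 \<le> g x" for x by (simp add: g_def)
  have g_nonpos: "g x = 0" if "x \<le> 0" for x using that unfolding g_def by (rule Gamma_density_nonpos)
  have A0: "0 \<le> A x" for x unfolding A_def using apos by (intro prod_nonneg) (simp add: less_imp_le)
  have close: "\<bar>g x * A x - g x * sqrt (pi / x) ^ d\<bar> \<le> \<delta> * (g x * (1 + x powr (- t)))" for x
  proof (cases "x > 0")
    case True
    have "\<bar>A x - sqrt (pi / x) ^ d\<bar> \<le> \<delta> * (1 + x powr (- t))"
      using abs_prod_theta_scaled_minus_sqrt_power_le[OF True M a]
      by (simp add: A_def \<delta>_def d_def t_def)
    then have "\<bar>g x\<bar> * \<bar>A x - sqrt (pi / x) ^ d\<bar> \<le> g x * (\<delta> * (1 + x powr (- t)))"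
      using g0[of x] by (simp add: mult_left_mono)
    then show ?thesis by (simp only: abs_mult[symmetric] right_diff_distrib mult.left_commute)
  qed (simp add: g_nonpos)
  have "\<exists>J. (\<integral>\<^sup>+x. ennreal (g x * A x) \<partial>lborel) = ennreal J \<and> 0 \<le> J \<and> \<bar>J - L\<bar> \<le> \<delta> * K"
  proof (rule nn_integral_approx[OF _ _ _ _ _ _ _ _ _ close])
    show "(\<integral>\<^sup>+x. ennreal (g x * sqrt (pi / x) ^ d) \<partial>lborel) = ennreal L"
      unfolding g_def L_def by (rule nn_integral_Gamma_density_sqrt_power[OF sd])
    show "(\<integral>\<^sup>+x. ennreal (g x * (1 + x powr (- t))) \<partial>lborel) = ennreal K"
      unfolding g_def K_def by (rule nn_integral_Gamma_density_one_plus_powr[OF s0 st])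
    show "0 \<le> g x * sqrt (pi / x) ^ d" for x
      by (cases "x > 0") (simp_all add: g0 g_nonpos)
    show "0 \<le> L" "0 \<le> K" using sd st s0 by (simp_all add: L_def K_def)
  qed (use g0 A0 M in \<open>auto simp: g_def A_def \<delta>_def\<close>)
  then show ?thesis unfolding g_def A_def L_def K_def \<delta>_def d_def t_def .
qed

lemma nn_integral_quad_form_powr_approx:
  fixes a :: "real^'n" and s M :: real
  assumes s: "s > real CARD('n) / 2" and M: "M \<ge> 1" and a: "\<forall>i. a$i \<ge> M"
  shows "\<exists>F. (\<integral>\<^sup>+k. ennreal (quad_form a k powr (-s)) \<partial>count_space UNIV) = ennreal F \<and> 0 \<le> F \<and>
    \<bar>F / (\<Prod>i\<in>UNIV. a$i) - pi powr (real CARD('n) / 2) * Gamma (s - real CARD('n) / 2) / Gamma s\<bar>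
      \<le> real CARD('n) * 3 ^ (CARD('n) - 1) * (Gamma s + Gamma (s - real (CARD('n) - 1) / 2)) / (M * Gamma s)"
proof -
  define P where "P = (\<Prod>i\<in>UNIV. a$i)"
  define L where "L = pi powr (real CARD('n) / 2) * Gamma (s - real CARD('n) / 2)"
  define C where "C = real CARD('n) * 3 ^ (CARD('n) - 1) / M * (Gamma s + Gamma (s - real (CARD('n) - 1) / 2))"
  have s0: "s > 0" using s by (smt (verit) of_nat_0_le_iff divide_nonneg_pos)
  have apos: "\<forall>i. a$i > 0" using a M by (smt (verit))
  have P0: "P > 0" unfolding P_def using apos by (simp add: prod_pos)
  have G: "Gamma s > 0" using s0 by simp
  obtain J where J: "(\<integral>\<^sup>+x. ennreal (indicator {0..} x * x powr (s - 1) / exp x *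
        (\<Prod>i\<in>UNIV. enn2real (theta (x / (a$i)\<^sup>2)) / a$i)) \<partial>lborel) = ennreal J"
    and J0: "0 \<le> J" and JL: "\<bar>J - L\<bar> \<le> C"
    using nn_integral_Gamma_density_theta_approx[OF s M a] unfolding L_def C_def by blast
  define F where "F = P * J / Gamma s"
  have "(\<integral>\<^sup>+k. ennreal (quad_form a k powr (-s)) \<partial>count_space UNIV) =
      ennreal (1 / Gamma s) * (ennreal (Gamma s) * (\<integral>\<^sup>+k. ennreal (quad_form a k powr (-s)) \<partial>count_space UNIV))"
    using G by (simp add: mult.assoc[symmetric] ennreal_mult[symmetric])
  also have "\<dots> = ennreal F"
    unfolding Gamma_mult_nn_integral_quad_form_rescaled[OF s0 apos] J F_def P_def[symmetric]
    using G P0 J0 by (simp add: ennreal_mult[symmetric])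
  finally have F: "(\<integral>\<^sup>+k. ennreal (quad_form a k powr (-s)) \<partial>count_space UNIV) = ennreal F" .
  have F0: "0 \<le> F" unfolding F_def using P0 J0 G by simp
  have "\<bar>F / P - L / Gamma s\<bar> = \<bar>J - L\<bar> / Gamma s"
    unfolding F_def using P0 G by (simp add: field_simps)
  also have "\<dots> \<le> C / Gamma s" using JL G by (simp add: divide_right_mono)
  also have "\<dots> = real CARD('n) * 3 ^ (CARD('n) - 1) * (Gamma s + Gamma (s - real (CARD('n) - 1) / 2)) / (M * Gamma s)"
    using M G by (simp add: C_def field_simps)
  finally show ?thesis
    using F F0 unfolding P_def L_def by blast
qed

section \<open>Summability and the limit of the normalising constant\<close>

lemma summable_on_if_nn_integral_finite:
  fixes g :: "'a \<Rightarrow> real"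
  assumes "\<And>x. g x \<ge> 0" and "(\<integral>\<^sup>+x. ennreal (g x) \<partial>count_space UNIV) \<noteq> \<infinity>"
  shows "g summable_on UNIV"
proof -
  have "integrable (count_space UNIV) g"
    using assms by (intro integrableI_nonneg) (auto simp: top.not_eq_extremum)
  then have "Infinite_Set_Sum.abs_summable_on g UNIV" by (simp add: abs_summable_on_def)
  then have "Infinite_Sum.abs_summable_on g UNIV" using abs_summable_equivalent by blast
  then show ?thesis using assms(1) by simp
qed

lemma infsum_eq_enn2real_nn_integral:
  fixes g :: "'a \<Rightarrow> real"
  assumes "\<And>x. g x \<ge> 0" and "(\<integral>\<^sup>+x. ennreal (g x) \<partial>count_space UNIV) \<noteq> \<infinity>"
  shows "(\<Sum>\<^sub>\<infinity>x. g x) = enn2real (\<integral>\<^sup>+x. ennreal (g x) \<partial>count_space UNIV)"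
proof -
  have "integrable (count_space UNIV) g"
    using assms by (intro integrableI_nonneg) (auto simp: top.not_eq_extremum)
  then have "Infinite_Set_Sum.abs_summable_on g UNIV" by (simp add: abs_summable_on_def)
  then have "(\<Sum>\<^sub>\<infinity>x. g x) = infsetsum g UNIV" by (simp add: infsetsum_infsum)
  also have "\<dots> = enn2real (\<integral>\<^sup>+x. ennreal (g x) \<partial>count_space UNIV)"
    using assms(2,1) by (rule infsetsum_conv_nn_integral)
  finally show ?thesis .
qed

lemma nn_integral_quad_form_powr_finite:
  fixes a :: "real^'n" and t :: real
  assumes a: "\<forall>i. a$i > 0" and t: "t > real CARD('n) / 2"
  shows "(\<integral>\<^sup>+k. ennreal (quad_form a k powr (-t)) \<partial>count_space UNIV) \<noteq> \<infinity>"
proof -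
  define b where "b = (\<chi> i. max 1 (a$i))"
  obtain F where F: "(\<integral>\<^sup>+k. ennreal (quad_form b k powr (-t)) \<partial>count_space UNIV) = ennreal F"
    using nn_integral_quad_form_powr_approx[OF t order.refl, of b] by (auto simp: b_def)
  have "quad_form b k \<le> quad_form a k" for k
    unfolding quad_form_def
  proof (intro add_left_mono sum_mono)
    fix i
    have "(a$i)\<^sup>2 \<le> (b$i)\<^sup>2" unfolding b_def using a[rule_format, of i] by (intro power_mono) auto
    then show "(real_of_int (k$i))\<^sup>2 / (b$i)\<^sup>2 \<le> (real_of_int (k$i))\<^sup>2 / (a$i)\<^sup>2"
      using a[rule_format, of i] by (intro divide_left_mono) (auto simp: b_def)
  qed
  moreover have "t > 0" using t by (smt (verit) of_nat_0_le_iff divide_nonneg_pos)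
  ultimately have "(\<integral>\<^sup>+k. ennreal (quad_form a k powr (-t)) \<partial>count_space UNIV) \<le>
        (\<integral>\<^sup>+k. ennreal (quad_form b k powr (-t)) \<partial>count_space UNIV)"
    by (intro nn_integral_mono ennreal_leI powr_mono2') (auto simp: quad_form_pos less_imp_le)
  then show ?thesis using F by (auto simp: top_unique)
qed

lemma quad_form_powr_summable:
  fixes a :: "real^'n" and t :: real
  assumes "\<forall>i. a$i > 0" and "t > real CARD('n) / 2"
  shows "(\<lambda>k. quad_form a k powr (-t)) summable_on UNIV"
  by (rule summable_on_if_nn_integral_finite[OF _ nn_integral_quad_form_powr_finite[OF assms]]) simp

lemma quad_form_powr_moments_summable:
  fixes a :: "real^'n" and t :: real
  assumes a: "\<forall>i. a$i > 0" and t: "t - 1 > real CARD('n) / 2"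
  shows "(\<lambda>k. (real_of_int (k$i))\<^sup>2 * quad_form a k powr (-t)) summable_on UNIV"
    and "(\<lambda>k. real_of_int (k$i) * quad_form a k powr (-t)) summable_on UNIV"
proof -
  have bound: "(real_of_int (k$i))\<^sup>2 * quad_form a k powr (-t) \<le> (a$i)\<^sup>2 * quad_form a k powr (-(t - 1))" for k
  proof -
    have "(real_of_int (k$i))\<^sup>2 * quad_form a k powr (-t) \<le> ((a$i)\<^sup>2 * quad_form a k) * quad_form a k powr (-t)"
      using a by (intro mult_right_mono of_int_sq_le_quad_form) auto
    also have "\<dots> = (a$i)\<^sup>2 * quad_form a k powr (-(t - 1))"
      using quad_form_pos[of a k] by (simp add: powr_diff powr_minus abs_of_pos field_simps)
    finally show ?thesis .
  qed
  show second: "(\<lambda>k. (real_of_int (k$i))\<^sup>2 * quad_form a k powr (-t)) summable_on UNIV"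
    by (rule summable_on_comparison_test[OF summable_on_cmult_right[OF quad_form_powr_summable[OF a t]] bound]) simp
  have "\<bar>real_of_int (k$i)\<bar> \<le> (real_of_int (k$i))\<^sup>2" for k
  proof -
    have "\<bar>k$i\<bar> \<le> \<bar>k$i\<bar>\<^sup>2"
    proof (cases "k$i = 0")
      case False
      then have "1 \<le> \<bar>k$i\<bar>" by linarith
      then show ?thesis by (rule self_le_power) simp
    qed simp
    then have "real_of_int \<bar>k$i\<bar> \<le> real_of_int (\<bar>k$i\<bar>\<^sup>2)" by (simp only: of_int_le_iff)
    then show ?thesis by simp
  qed
  then have "norm (real_of_int (k$i) * quad_form a k powr (-t)) \<le> (real_of_int (k$i))\<^sup>2 * quad_form a k powr (-t)" for k
    by (simp add: abs_mult mult_right_mono)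
  then have "(\<lambda>k. norm (real_of_int (k$i) * quad_form a k powr (-t))) summable_on UNIV"
    by (intro summable_on_comparison_test[OF second]) auto
  then show "(\<lambda>k. real_of_int (k$i) * quad_form a k powr (-t)) summable_on UNIV"
    by (rule abs_summable_summable)
qed

lemma f_md_eq_infsum:
  fixes a :: "real^'n"
  shows "f_md m a = (\<Sum>\<^sub>\<infinity>k. quad_form a k powr (-((m + real CARD('n)) / 2)))"
  unfolding f_md_def by (simp only: minus_divide_left)

lemma f_md_asymptotic:
  fixes m :: real
  assumes m: "m > 0"
  shows "\<forall>\<epsilon>>0. \<exists>M. \<forall>a::real^'n. (\<forall>i. a$i \<ge> M) \<longrightarrow>
           \<bar>f_md m a / (\<Prod>i\<in>UNIV. a$i)
             - pi powr (real CARD('n) / 2) * Gamma (m / 2) / Gamma ((m + real CARD('n)) / 2)\<bar> < \<epsilon>"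
proof (intro allI impI)
  fix \<epsilon> :: real assume \<epsilon>: "\<epsilon> > 0"
  define d where "d = CARD('n)"
  define s where "s = (m + real d) / 2"
  define C where "C = real d * 3 ^ (d - 1) * (Gamma s + Gamma (s - real (d - 1) / 2)) / Gamma s"
  define M where "M = max 1 (C / \<epsilon> + 1)"
  have s: "s > real d / 2" using m by (simp add: s_def)
  have "s - real (d - 1) / 2 > 0" using s by (simp add: d_def of_nat_diff)
  then have C: "C \<ge> 0" using s by (simp add: C_def)
  have M: "M \<ge> 1" by (simp add: M_def)
  have CM: "C / M < \<epsilon>"
  proof -
    have "C < M * \<epsilon>" using \<epsilon> C by (simp add: M_def field_simps max_def)
    then show ?thesis using M by (simp add: divide_less_eq mult.commute)
  qed
  show "\<exists>M. \<forall>a::real^'n. (\<forall>i. a$i \<ge> M) \<longrightarrow>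
           \<bar>f_md m a / (\<Prod>i\<in>UNIV. a$i)
             - pi powr (real CARD('n) / 2) * Gamma (m / 2) / Gamma ((m + real CARD('n)) / 2)\<bar> < \<epsilon>"
  proof (intro exI allI impI)
    fix a :: "real^'n" assume a: "\<forall>i. a$i \<ge> M"
    obtain F where F: "(\<integral>\<^sup>+k. ennreal (quad_form a k powr (-s)) \<partial>count_space UNIV) = ennreal F" "0 \<le> F"
      and bound: "\<bar>F / (\<Prod>i\<in>UNIV. a$i) - pi powr (real d / 2) * Gamma (s - real d / 2) / Gamma s\<bar> \<le> C / M"
      using nn_integral_quad_form_powr_approx[OF s[unfolded d_def] M a] by (auto simp: C_def d_def field_simps)
    have fF: "f_md m a = F"
      using infsum_eq_enn2real_nn_integral[of "\<lambda>k. quad_form a k powr (-s)"] F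
      by (simp add: f_md_eq_infsum s_def d_def)
    have sm: "s - real d / 2 = m / 2" by (simp add: s_def field_simps)
    have "\<bar>f_md m a / (\<Prod>i\<in>UNIV. a$i) - pi powr (real d / 2) * Gamma (m / 2) / Gamma s\<bar> < \<epsilon>"
      unfolding fF using bound[unfolded sm] CM by linarith
    then show "\<bar>f_md m a / (\<Prod>i\<in>UNIV. a$i)
             - pi powr (real CARD('n) / 2) * Gamma (m / 2) / Gamma ((m + real CARD('n)) / 2)\<bar> < \<epsilon>"
      by (simp add: s_def d_def)
  qed
qed

section \<open>The maximum entropy distribution\<close>

lemma p_md_eq:
  fixes a :: "real^'n"
  shows "p_md m a k = quad_form a k powr (-((m + real CARD('n)) / 2)) / f_md m a"
  unfolding p_md_def by (simp only: minus_divide_left)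

lemma f_md_pos:
  fixes a :: "real^'n"
  assumes m: "m > 0" and a: "\<forall>i. a$i > 0"
  shows "f_md m a > 0"
proof -
  have "(\<lambda>k. quad_form a k powr (-((m + real CARD('n)) / 2))) summable_on UNIV"
    using m by (intro quad_form_powr_summable[OF a]) simp
  then have "(\<Sum>k\<in>{0}. quad_form a k powr (-((m + real CARD('n)) / 2))) \<le> f_md m a"
    unfolding f_md_eq_infsum by (intro finite_sum_le_infsum) auto
  then have "quad_form a 0 powr (-((m + real CARD('n)) / 2)) \<le> f_md m a" by simp
  moreover have "0 < quad_form a 0 powr (-((m + real CARD('n)) / 2))"
    using quad_form_pos[of a 0] by simp
  ultimately show ?thesis by linarith
qed

lemma p_md_pos:
  fixes a :: "real^'n"
  assumes "m > 0" and "\<forall>i. a$i > 0"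
  shows "p_md m a k > 0"
  unfolding p_md_eq using f_md_pos[OF assms] quad_form_pos[of a k] by simp

lemma p_md_has_sum_1:
  fixes a :: "real^'n"
  assumes m: "m > 0" and a: "\<forall>i. a$i > 0"
  shows "(p_md m a has_sum 1) UNIV"
proof -
  have "(\<lambda>k. quad_form a k powr (-((m + real CARD('n)) / 2))) summable_on UNIV"
    using m by (intro quad_form_powr_summable[OF a]) simp
  then have "((\<lambda>k. quad_form a k powr (-((m + real CARD('n)) / 2)) / f_md m a) has_sum (f_md m a / f_md m a)) UNIV"
    unfolding f_md_eq_infsum by (intro has_sum_divide_const has_sum_infsum)
  then show ?thesis using f_md_pos[OF m a] by (simp add: p_md_eq[abs_def])
qed

lemma p_md_moments:
  fixes a :: "real^'n"
  assumes m: "m > 2" and a: "\<forall>i. a$i > 0"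
  shows "(\<lambda>k. (real_of_int (k$i))\<^sup>2 * p_md m a k) summable_on UNIV"
    and "((\<lambda>k. real_of_int (k$i) * p_md m a k) has_sum 0) UNIV"
proof -
  define t where "t = (m + real CARD('n)) / 2"
  have t: "t - 1 > real CARD('n) / 2" using m by (simp add: t_def field_simps)
  have p: "p_md m a k = quad_form a k powr (-t) / f_md m a" for k unfolding p_md_eq t_def ..
  have "(\<lambda>k. (real_of_int (k$i))\<^sup>2 * quad_form a k powr (-t) / f_md m a) summable_on UNIV"
    by (rule has_sum_imp_summable, rule has_sum_divide_const, rule has_sum_infsum)
       (rule quad_form_powr_moments_summable(1)[OF a t])
  then show "(\<lambda>k. (real_of_int (k$i))\<^sup>2 * p_md m a k) summable_on UNIV" by (simp add: p)
  define h where "h k = real_of_int (k$i) * p_md m a k" for k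
  have "(\<lambda>k. real_of_int (k$i) * quad_form a k powr (-t) / f_md m a) summable_on UNIV"
    by (rule has_sum_imp_summable, rule has_sum_divide_const, rule has_sum_infsum)
       (rule quad_form_powr_moments_summable(2)[OF a t])
  then have "h summable_on UNIV" by (simp add: h_def[abs_def] p)
  then have hs: "(h has_sum infsum h UNIV) UNIV" by (rule has_sum_infsum)
  have "((\<lambda>k. h (-k)) has_sum infsum h UNIV) UNIV \<longleftrightarrow> (h has_sum infsum h UNIV) UNIV"
    by (rule has_sum_reindex_bij_witness[where i = uminus and j = uminus]) auto
  moreover have "h (-k) = - h k" for k by (simp add: h_def p quad_form_uminus)
  ultimately have "((\<lambda>k. - h k) has_sum infsum h UNIV) UNIV" using hs by simp
  then have "(h has_sum - infsum h UNIV) UNIV" by (simp add: has_sum_uminus)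
  with hs have "infsum h UNIV = - infsum h UNIV" by (rule has_sum_unique)
  then show "((\<lambda>k. real_of_int (k$i) * p_md m a k) has_sum 0) UNIV"
    using hs unfolding h_def[abs_def] by simp
qed

lemma p_md_feasible:
  fixes a :: "real^'n"
  assumes "m > 2" and "\<forall>i. a$i > 0"
  shows "feasible (\<chi> i. \<Sum>\<^sub>\<infinity>k. (real_of_int (k$i))\<^sup>2 * p_md m a k) (p_md m a)"
proof -
  have m: "m > 0" using assms(1) by simp
  have "0 \<le> p_md m a k" for k using p_md_pos[OF m assms(2)] by (rule less_imp_le)
  moreover have "((\<lambda>k. (real_of_int (k$i))\<^sup>2 * p_md m a k) has_sum
      (\<Sum>\<^sub>\<infinity>k. (real_of_int (k$i))\<^sup>2 * p_md m a k)) UNIV" for i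
    by (rule has_sum_infsum[OF p_md_moments(1)[OF assms]])
  ultimately show ?thesis
    unfolding feasible_def using p_md_has_sum_1[OF m assms(2)] p_md_moments(2)[OF assms] by simp
qed

lemma p_md_powr_q_minus_1:
  fixes a :: "real^'n"
  assumes mq: "(m + real CARD('n)) * (1 - q) = 2" and m: "m > 0" and a: "\<forall>i. a$i > 0"
  shows "p_md m a k powr (q - 1) = f_md m a powr (1 - q) * quad_form a k"
proof -
  have W: "f_md m a > 0" by (rule f_md_pos[OF m a])
  have "-((m + real CARD('n)) / 2) * (q - 1) = (m + real CARD('n)) * (1 - q) / 2"
    by (simp add: field_simps)
  with mq have e: "-((m + real CARD('n)) / 2) * (q - 1) = 1" by simp
  have "p_md m a k powr (q - 1) =
      (quad_form a k powr (-((m + real CARD('n)) / 2))) powr (q - 1) / f_md m a powr (q - 1)"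
    unfolding p_md_eq using W by (simp add: powr_divide)
  also have "(quad_form a k powr (-((m + real CARD('n)) / 2))) powr (q - 1) = quad_form a k"
    using quad_form_pos[of a k] by (simp only: powr_powr e powr_one_gt_zero_iff)
  finally show ?thesis using W by (simp add: powr_diff powr_minus_divide field_simps)
qed

lemma has_sum_sum:
  fixes f :: "'i \<Rightarrow> 'a \<Rightarrow> real"
  assumes "finite I" "\<And>i. i \<in> I \<Longrightarrow> (f i has_sum S i) A"
  shows "((\<lambda>x. \<Sum>i\<in>I. f i x) has_sum (\<Sum>i\<in>I. S i)) A"
  using assms
proof (induction I rule: finite_induct)
  case empty
  then show ?case by simp
next
  case (insert j F)
  then show ?case by (simp, intro has_sum_add) auto
qed

lemma feasible_has_sum_quad_form:
  fixes a :: "real^'n"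
  assumes "feasible u2 r"
  shows "((\<lambda>k. quad_form a k * r k) has_sum (1 + (\<Sum>i\<in>UNIV. u2$i / (a$i)\<^sup>2))) UNIV"
proof -
  from assms have r1: "(r has_sum 1) UNIV"
    and r2: "\<And>i. ((\<lambda>k. (real_of_int (k$i))\<^sup>2 * r k) has_sum u2$i) UNIV"
    unfolding feasible_def by auto
  have "((\<lambda>k. r k + (\<Sum>i\<in>UNIV. (real_of_int (k$i))\<^sup>2 * r k / (a$i)\<^sup>2)) has_sum
          (1 + (\<Sum>i\<in>UNIV. u2$i / (a$i)\<^sup>2))) UNIV"
    by (intro has_sum_add r1 has_sum_sum has_sum_divide_const r2) auto
  then show ?thesis
    unfolding quad_form_def by (simp add: ring_distribs sum_distrib_right)
qed

lemma powr_le_tangent: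
  fixes x c q :: real
  assumes x: "x \<ge> 0" and c: "c > 0" and q: "0 < q" "q < 1"
  shows "x powr q \<le> (1 - q) * c powr q + q * c powr (q - 1) * x"
proof (cases "x = 0")
  case True
  then show ?thesis using q c by simp
next
  case False
  then have xp: "x > 0" using x by simp
  have "(x / c) powr q * 1 powr (1 - q) \<le> q * (x / c) + (1 - q) * 1"
    using q xp c by (intro Youngs_inequality_0) auto
  then have "x powr q / c powr q \<le> q * (x / c) + (1 - q)" using xp c by (simp add: powr_divide)
  then have "x powr q \<le> (q * (x / c) + (1 - q)) * c powr q" using c by (simp add: divide_le_eq)
  also have "\<dots> = (1 - q) * c powr q + q * (c powr q / c) * x" by (simp add: algebra_simps)
  also have "c powr q / c = c powr (q - 1)" using c by (simp add: powr_diff)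
  finally show ?thesis .
qed

lemma infsum_powr_le_if_powr_linear:
  fixes p r Q :: "'a \<Rightarrow> real" and q c V :: real
  assumes q: "0 < q" "q < 1" and p: "\<And>k. 0 < p k" and r: "\<And>k. 0 \<le> r k"
    and pQ: "\<And>k. p k powr (q - 1) = c * Q k"
    and Qp: "((\<lambda>k. Q k * p k) has_sum V) UNIV" and Qr: "((\<lambda>k. Q k * r k) has_sum V) UNIV"
  shows "(\<lambda>k. r k powr q) summable_on UNIV" and "(\<Sum>\<^sub>\<infinity>k. r k powr q) \<le> (\<Sum>\<^sub>\<infinity>k. p k powr q)"
proof -
  have "p k powr q = p k powr (q - 1) * p k powr 1" for k by (simp only: powr_add[symmetric]) simp
  then have "p k powr q = c * (Q k * p k)" for k using p[of k] by (simp add: pQ)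
  then have psum: "((\<lambda>k. p k powr q) has_sum c * V) UNIV"
    using has_sum_cmult_right[OF Qp, of c] by simp
  have tangent: "r k powr q \<le> (1 - q) * p k powr q + q * c * (Q k * r k)" for k
    using powr_le_tangent[OF r p q] by (simp add: pQ mult_ac)
  have "((\<lambda>k. (1 - q) * p k powr q + q * c * (Q k * r k)) has_sum ((1 - q) * (c * V) + q * c * V)) UNIV"
    by (intro has_sum_add has_sum_cmult_right psum Qr)
  moreover have "(1 - q) * (c * V) + q * c * V = c * V" by (simp add: algebra_simps)
  ultimately have rhs: "((\<lambda>k. (1 - q) * p k powr q + q * c * (Q k * r k)) has_sum c * V) UNIV"
    by simp
  show summable: "(\<lambda>k. r k powr q) summable_on UNIV"
    by (rule summable_on_comparison_test[OF has_sum_imp_summable[OF rhs] tangent]) simp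
  have "(\<Sum>\<^sub>\<infinity>k. r k powr q) \<le> c * V"
    by (rule has_sum_mono[OF has_sum_infsum[OF summable] rhs tangent])
  also have "\<dots> = (\<Sum>\<^sub>\<infinity>k. p k powr q)" using psum by (simp add: infsumI)
  finally show "(\<Sum>\<^sub>\<infinity>k. r k powr q) \<le> (\<Sum>\<^sub>\<infinity>k. p k powr q)" .
qed

lemma tsallis_le_tsallis:
  assumes "q < 1" and "(\<Sum>\<^sub>\<infinity>k. p' k powr q) \<le> (\<Sum>\<^sub>\<infinity>k. p k powr q)"
  shows "tsallis q p' \<le> tsallis q p"
proof -
  have "1 / (q - 1) < 0" using assms(1) by simp
  then show ?thesis unfolding tsallis_def using assms(2) by (intro mult_left_mono_neg) auto
qed

lemma p_md_maximizes_tsallis: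
  fixes q m :: real and a :: "real^'n"
  assumes q: "q < 1" and mq: "(m + real CARD('n)) * (1 - q) = 2" and m: "m > 2" and a: "\<forall>i. a$i > 0"
  shows "let p = p_md m a; u2 = (\<chi> i. \<Sum>\<^sub>\<infinity>k. (real_of_int (k$i))^2 * p k)
         in feasible u2 p \<and> (\<lambda>k. p k powr q) summable_on UNIV \<and>
            (\<forall>p'. feasible u2 p' \<longrightarrow> (\<lambda>k. p' k powr q) summable_on UNIV \<and> tsallis q p' \<le> tsallis q p)"
proof -
  define p where "p = p_md m a"
  define u2 where "u2 = (\<chi> i. \<Sum>\<^sub>\<infinity>k. (real_of_int (k$i))^2 * p k)"
  have m0: "m > 0" using m by simp
  have q0: "0 < q"
  proof (rule ccontr)
    assume "\<not> 0 < q"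
    then have "(m + real CARD('n)) * 1 \<le> (m + real CARD('n)) * (1 - q)" using m by (intro mult_left_mono) auto
    then show False using mq m by simp
  qed
  have feas: "feasible u2 p" unfolding p_def u2_def by (rule p_md_feasible[OF m a])
  have maximal: "(\<lambda>k. r k powr q) summable_on UNIV \<and> (\<Sum>\<^sub>\<infinity>k. r k powr q) \<le> (\<Sum>\<^sub>\<infinity>k. p k powr q)"
    if "feasible u2 r" for r
    using infsum_powr_le_if_powr_linear[OF q0 q _ _ _
            feasible_has_sum_quad_form[OF feas] feasible_has_sum_quad_form[OF that]]
          p_md_pos[OF m0 a] p_md_powr_q_minus_1[OF mq m0 a] that
    unfolding p_def feasible_def by blast
  show ?thesis
    unfolding Let_def p_def[symmetric] u2_def[symmetric]
    using feas maximal[OF feas] maximal tsallis_le_tsallis[OF q] by blast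
qed

theorem theorem8:
  fixes q m :: real
  assumes "real CARD('n) / (real CARD('n) + 2) < q" and "q < 1"
    and "m = 2 / (1 - q) - real CARD('n)"
  shows "(\<forall>a::real^'n. (\<forall>i. a$i > 0) \<longrightarrow>
           (let p = p_md m a;
                u2 = (\<chi> i. \<Sum>\<^sub>\<infinity>k. (real_of_int (k$i))^2 * p k)
            in feasible u2 p \<and> (\<lambda>k. p k powr q) summable_on UNIV \<and>
               (\<forall>p'. feasible u2 p' \<longrightarrow>
                   (\<lambda>k. p' k powr q) summable_on UNIV \<and> tsallis q p' \<le> tsallis q p)))
       \<and> (\<forall>\<epsilon>>0. \<exists>M. \<forall>a::real^'n. (\<forall>i. a$i \<ge> M) \<longrightarrow>
           \<bar>f_md m a / (\<Prod>i\<in>UNIV. a$i)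
             - pi powr (real CARD('n) / 2) * Gamma (m / 2) / Gamma ((m + real CARD('n)) / 2)\<bar> < \<epsilon>)"
proof -
  define d where "d = real CARD('n)"
  have q1: "1 - q > 0" using assms(2) by simp
  have "m + d = 2 / (1 - q)" by (simp add: assms(3) d_def)
  moreover have "1 - q \<noteq> 0" using q1 by simp
  ultimately have mq: "(m + d) * (1 - q) = 2" by (metis nonzero_eq_divide_eq)
  have "d < q * (d + 2)" using assms(1) by (simp add: d_def divide_less_eq add_pos_nonneg)
  then have "(d + 2) * (1 - q) < 2" by (simp add: algebra_simps)
  then have m: "m > 2" using mq q1 by (smt (verit) mult_right_mono)
  show ?thesis
    using p_md_maximizes_tsallis[OF assms(2) mq[unfolded d_def] m] f_md_asymptotic[of m] m by simp
qed

end
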